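(* Let $(S,\ast)$ and $(T,\ast')$ be adequate commutative partial semigroups, let $h:S\to T$ be a surjective partial semigroup homomorphism, and let $\tilde h:\beta S\to\beta T$ be the continuous extension of $h$. Suppose $\tilde h$ maps $\delta S$ onto $\delta T$. Then (a) $\tilde h(K(\delta S))=K(\delta T)$; (b) if $A$ is a central set in $S$, then $h(A)$ is a central set in $T$; (c) if $A$ is a central set in $T$, then $h^{-1}(A)$ is a central set in $S$.
   Context: A partial semigroup is a pair $(S,\ast)$ where $\ast$ is an operation defined on a subset of $S\times S$ such that $(x\ast y)\ast z=x\ast(y\ast z)$ in the sense that if either side is defined, so is the other and they are equal; commutative means $x\ast y=y\ast x$ whenever defined. $\phi_S(s)=\{t: s\ast t\text{ defined}\}$, $\sigma_S(H)=\bigcap_{s\in H}\phi_S(s)$ for finite nonempty $H$; $S$ is adequate if all $\sigma_S(H)\ne\emptyset$. A map $h:S\to T$ is a partial semigroup homomorphism if whenever $y\in\phi_S(x)$, $h(y)\in\phi_T(h(x))$ and $h(x\ast y)=h(x)\ast' h(y)$. $\beta S$ is the Stone–Čech compactification of discrete $S$ (ultrafilters on $S$); $\tilde h(p)=\{B\subseteq T: h^{-1}(B)\in p\}$. $\delta S=\bigcap_{x\in S}\overline{\phi_S(x)}$, where $\overline{A}=\{p\in\beta S: A\in p\}$, with operation $p\ast q=\{A\subseteq S:\{s: s^{-1}A\in q\}\in p\}$, $s^{-1}A=\{t\in\phi_S(s): s\ast t\in A\}$; $\delta S$ is a compact right topological semigroup with smallest two-sided ideal $K(\delta S)$ (similarly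 for $T$). $A\subseteq S$ is central if there is an idempotent $p\in K(\delta S)\cap\overline{A}$. *)

theory Defs
  imports Main
begin

text \<open>A partial operation on the type 'a (the whole type is the underlying set S):
  op x y = None means x * y is undefined.\<close>

definition partial_semigroup :: "('a \<Rightarrow> 'a \<Rightarrow> 'a option) \<Rightarrow> bool" where
  "partial_semigroup op \<longleftrightarrow>
     (\<forall>x y z. Option.bind (op x y) (\<lambda>u. op u z) = Option.bind (op y z) (\<lambda>v. op x v))"

definition pcommutative :: "('a \<Rightarrow> 'a \<Rightarrow> 'a option) \<Rightarrow> bool" where
  "pcommutative op \<longleftrightarrow> (\<forall>x y. op x y = op y x)"

definition phi :: "('a \<Rightarrow> 'a \<Rightarrow> 'a option) \<Rightarrow> 'a \<Rightarrow> 'a set" where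
  "phi op s = {t. op s t \<noteq> None}"

definition sigma :: "('a \<Rightarrow> 'a \<Rightarrow> 'a option) \<Rightarrow> 'a set \<Rightarrow> 'a set" where
  "sigma op H = (\<Inter>s\<in>H. phi op s)"

definition adequate :: "('a \<Rightarrow> 'a \<Rightarrow> 'a option) \<Rightarrow> bool" where
  "adequate op \<longleftrightarrow> (\<forall>H. finite H \<and> H \<noteq> {} \<longrightarrow> sigma op H \<noteq> {})"

definition ps_hom :: "('a \<Rightarrow> 'a \<Rightarrow> 'a option) \<Rightarrow> ('b \<Rightarrow> 'b \<Rightarrow> 'b option) \<Rightarrow> ('a \<Rightarrow> 'b) \<Rightarrow> bool" where
  "ps_hom opS opT h \<longleftrightarrow>
     (\<forall>x y. y \<in> phi opS x \<longrightarrow> h y \<in> phi opT (h x) \<and> opT (h x) (h y) = map_option h (opS x y))"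

definition is_ultrafilter :: "'a set set \<Rightarrow> bool" where
  "is_ultrafilter p \<longleftrightarrow> UNIV \<in> p \<and> {} \<notin> p \<and>
     (\<forall>A B. A \<in> p \<and> A \<subseteq> B \<longrightarrow> B \<in> p) \<and>
     (\<forall>A B. A \<in> p \<and> B \<in> p \<longrightarrow> A \<inter> B \<in> p) \<and>
     (\<forall>A. A \<in> p \<or> - A \<in> p)"

definition betaS :: "'a set set set" where
  "betaS = {p. is_ultrafilter p}"

definition bclosure :: "'a set \<Rightarrow> 'a set set set" where
  "bclosure A = {p \<in> betaS. A \<in> p}"

definition deltaS :: "('a \<Rightarrow> 'a \<Rightarrow> 'a option) \<Rightarrow> 'a set set set" where
  "deltaS op = (\<Inter>x. bclosure (phi op x))"

definition ext :: "('a \<Rightarrow> 'b) \<Rightarrow> 'a set set \<Rightarrow> 'b set set" where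
  "ext h p = {B. h -` B \<in> p}"

definition sinv :: "('a \<Rightarrow> 'a \<Rightarrow> 'a option) \<Rightarrow> 'a \<Rightarrow> 'a set \<Rightarrow> 'a set" where
  "sinv op s A = {t \<in> phi op s. the (op s t) \<in> A}"

definition ustar :: "('a \<Rightarrow> 'a \<Rightarrow> 'a option) \<Rightarrow> 'a set set \<Rightarrow> 'a set set \<Rightarrow> 'a set set" where
  "ustar op p q = {A. {s. sinv op s A \<in> q} \<in> p}"

definition sg_ideal :: "'c set \<Rightarrow> ('c \<Rightarrow> 'c \<Rightarrow> 'c) \<Rightarrow> 'c set \<Rightarrow> bool" where
  "sg_ideal D m I \<longleftrightarrow> I \<noteq> {} \<and> I \<subseteq> D \<and> (\<forall>x\<in>I. \<forall>y\<in>D. m x y \<in> I \<and> m y x \<in> I)"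

definition Kmin :: "'c set \<Rightarrow> ('c \<Rightarrow> 'c \<Rightarrow> 'c) \<Rightarrow> 'c set" where
  "Kmin D m = \<Inter>{I. sg_ideal D m I}"

definition KdeltaS :: "('a \<Rightarrow> 'a \<Rightarrow> 'a option) \<Rightarrow> 'a set set set" where
  "KdeltaS op = Kmin (deltaS op) (ustar op)"

definition central :: "('a \<Rightarrow> 'a \<Rightarrow> 'a option) \<Rightarrow> 'a set \<Rightarrow> bool" where
  "central op A \<longleftrightarrow> (\<exists>p \<in> KdeltaS op \<inter> bclosure A. ustar op p p = p)"

end

theory Submission
  imports Defs
begin

text \<open>
  With the Stone topology, \<open>\<delta>S\<close> and \<open>\<delta>T\<close> are compact right topological semigroups, and
  \<open>h~\<close> restricts to a continuous homomorphism of \<open>\<delta>S\<close> onto \<open>\<delta>T\<close>. Images and preimages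
  of ideals under such a map are ideals, so it carries \<open>K(\<delta>S)\<close> onto \<open>K(\<delta>T)\<close>; this
  is (a), and (b) follows since \<open>h~\<close> also preserves idempotents. For (c), an idempotent
  \<open>q \<in> K(\<delta>T)\<close> lies in the image of a minimal left ideal \<open>L\<close> of \<open>\<delta>S\<close>. Then
  \<open>L \<inter> h~\<^sup>-\<^sup>1(q)\<close> is a nonempty closed subsemigroup, hence contains an idempotent
  by Ellis' theorem, and this idempotent lies in \<open>L \<subseteq> K(\<delta>S)\<close>.
\<close>

section \<open>Ultrafilters and the Stone topology\<close>

lemma ultrafilter_UNIV: "is_ultrafilter p \<Longrightarrow> UNIV \<in> p"
  by (simp add: is_ultrafilter_def)

lemma ultrafilter_empty: "is_ultrafilter p \<Longrightarrow> {} \<notin> p"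
  by (simp add: is_ultrafilter_def)

lemma ultrafilter_mono: "is_ultrafilter p \<Longrightarrow> A \<in> p \<Longrightarrow> A \<subseteq> B \<Longrightarrow> B \<in> p"
  unfolding is_ultrafilter_def by blast

lemma ultrafilter_Int_iff: "is_ultrafilter p \<Longrightarrow> A \<inter> B \<in> p \<longleftrightarrow> A \<in> p \<and> B \<in> p"
  unfolding is_ultrafilter_def by blast

lemma ultrafilter_Compl_iff:
  assumes "is_ultrafilter p"
  shows "- A \<in> p \<longleftrightarrow> A \<notin> p"
proof -
  have "A \<inter> - A \<notin> p"
    using ultrafilter_empty[OF assms] by simp
  then show ?thesis
    using assms unfolding is_ultrafilter_def by blast
qed

lemma ultrafilter_eqI:
  assumes "is_ultrafilter p" "is_ultrafilter q" "p \<subseteq> q"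
  shows "p = q"
proof
  show "q \<subseteq> p"
    using assms ultrafilter_Compl_iff by blast
qed (fact assms(3))

lemma ultrafilter_Inter:
  assumes "is_ultrafilter p"
  shows "finite H \<Longrightarrow> H \<subseteq> p \<Longrightarrow> \<Inter>H \<in> p"
  by (induction H rule: finite_induct) (auto simp: assms ultrafilter_UNIV ultrafilter_Int_iff)

definition fip :: "'a set set \<Rightarrow> bool" where
  "fip F \<longleftrightarrow> (\<forall>H. finite H \<longrightarrow> H \<subseteq> F \<longrightarrow> \<Inter>H \<noteq> {})"

definition maximal_fip :: "'a set set \<Rightarrow> bool" where
  "maximal_fip G \<longleftrightarrow> fip G \<and> (\<forall>X. fip X \<longrightarrow> G \<subseteq> X \<longrightarrow> X = G)"

lemma maximal_fip_exists:
  assumes "fip F"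
  shows "\<exists>G. F \<subseteq> G \<and> maximal_fip G"
proof -
  have "\<exists>G\<in>{G. F \<subseteq> G \<and> fip G}. \<forall>X\<in>{G. F \<subseteq> G \<and> fip G}. G \<subseteq> X \<longrightarrow> X = G"
  proof (rule subset_Zorn_nonempty)
    fix C assume C: "C \<noteq> {}" "subset.chain {G. F \<subseteq> G \<and> fip G} C"
    have "fip (\<Union>C)"
      unfolding fip_def
    proof (intro allI impI)
      fix H assume "finite H" "H \<subseteq> \<Union>C"
      then obtain G where "G \<in> C" "H \<subseteq> G"
        using C finite_subset_Union_chain by blast
      then show "\<Inter>H \<noteq> {}"
        using C(2) \<open>finite H\<close> unfolding subset_chain_def fip_def by blast
    qed
    then show "\<Union>C \<in> {G. F \<subseteq> G \<and> fip G}"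
      using C unfolding subset_chain_def by blast
  qed (use assms in blast)
  then obtain G where G: "G \<in> {G. F \<subseteq> G \<and> fip G}"
    and max: "\<forall>X\<in>{G. F \<subseteq> G \<and> fip G}. G \<subseteq> X \<longrightarrow> X = G" ..
  then have "X = G" if "fip X" "G \<subseteq> X" for X
    using that by auto
  then show ?thesis
    using G unfolding maximal_fip_def by blast
qed

lemma maximal_fip_mem_iff:
  assumes "maximal_fip G"
  shows "A \<in> G \<longleftrightarrow> (\<forall>H. finite H \<longrightarrow> H \<subseteq> G \<longrightarrow> A \<inter> \<Inter>H \<noteq> {})"
proof
  assume "A \<in> G"
  then show "\<forall>H. finite H \<longrightarrow> H \<subseteq> G \<longrightarrow> A \<inter> \<Inter>H \<noteq> {}"
    using assms unfolding maximal_fip_def fip_def by (metis Inter_insert finite_insert insert_subset)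
next
  assume meets: "\<forall>H. finite H \<longrightarrow> H \<subseteq> G \<longrightarrow> A \<inter> \<Inter>H \<noteq> {}"
  have "fip (insert A G)"
    unfolding fip_def
  proof (intro allI impI)
    fix H assume "finite H" "H \<subseteq> insert A G"
    then have "A \<inter> \<Inter>(H - {A}) \<noteq> {}"
      using meets by blast
    then show "\<Inter>H \<noteq> {}"
      by blast
  qed
  then show "A \<in> G"
    using assms unfolding maximal_fip_def by blast
qed

lemma maximal_fip_ultrafilter:
  assumes "maximal_fip G"
  shows "is_ultrafilter G"
  unfolding is_ultrafilter_def
proof (intro conjI allI impI)
  show "UNIV \<in> G" "{} \<notin> G"
    using assms unfolding maximal_fip_mem_iff[OF assms] maximal_fip_def fip_def by auto
next
  fix A B assume "A \<in> G \<and> A \<subseteq> B"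
  then show "B \<in> G"
    unfolding maximal_fip_mem_iff[OF assms] by blast
next
  fix A B assume "A \<in> G \<and> B \<in> G"
  then have "A \<inter> \<Inter>(insert B H) \<noteq> {}" if "finite H" "H \<subseteq> G" for H
    using that maximal_fip_mem_iff[OF assms, of A] by blast
  then show "A \<inter> B \<in> G"
    unfolding maximal_fip_mem_iff[OF assms, of "A \<inter> B"] by (simp add: Int_assoc)
next
  fix A show "A \<in> G \<or> - A \<in> G"
  proof (rule ccontr)
    assume "\<not> (A \<in> G \<or> - A \<in> G)"
    then obtain H1 H2 where "finite H1" "H1 \<subseteq> G" "A \<inter> \<Inter>H1 = {}"
      and "finite H2" "H2 \<subseteq> G" "- A \<inter> \<Inter>H2 = {}"
      unfolding maximal_fip_mem_iff[OF assms] by blast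
    then have "finite (H1 \<union> H2)" "H1 \<union> H2 \<subseteq> G" "\<Inter>(H1 \<union> H2) = {}"
      by blast+
    then show False
      using assms unfolding maximal_fip_def fip_def by blast
  qed
qed

lemma ultrafilter_exists: "fip F \<Longrightarrow> \<exists>p. is_ultrafilter p \<and> F \<subseteq> p"
  using maximal_fip_exists maximal_fip_ultrafilter by blast

definition ufs_containing :: "'a set set \<Rightarrow> 'a set set set" where
  "ufs_containing F = {p \<in> betaS. F \<subseteq> p}"

text \<open>The closed subsets of \<open>\<beta>S\<close> are exactly the sets \<^term>\<open>ufs_containing F\<close>.\<close>

definition uf_closed :: "'a set set set \<Rightarrow> bool" where
  "uf_closed C \<longleftrightarrow> (\<exists>F. C = ufs_containing F)"

lemma uf_closed_ufs_containing [simp]: "uf_closed (ufs_containing F)"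
  unfolding uf_closed_def by blast

lemma uf_closed_subset_betaS: "uf_closed C \<Longrightarrow> C \<subseteq> betaS"
  unfolding uf_closed_def ufs_containing_def by blast

lemma uf_closed_eq: "uf_closed C \<Longrightarrow> C = ufs_containing (\<Inter>C)"
  unfolding uf_closed_def ufs_containing_def by blast

lemma uf_closedI:
  assumes "C \<subseteq> betaS" "\<And>p. p \<in> betaS \<Longrightarrow> \<Inter>C \<subseteq> p \<Longrightarrow> p \<in> C"
  shows "uf_closed C"
proof -
  have "C = ufs_containing (\<Inter>C)"
    using assms unfolding ufs_containing_def by blast
  then show ?thesis
    unfolding uf_closed_def by blast
qed

lemma uf_closed_Inter:
  assumes "CC \<noteq> {}" "\<And>C. C \<in> CC \<Longrightarrow> uf_closed C"
  shows "uf_closed (\<Inter>CC)"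
proof (rule uf_closedI)
  show "\<Inter>CC \<subseteq> betaS"
    using assms uf_closed_subset_betaS by blast
  fix p assume "p \<in> betaS" "\<Inter>(\<Inter>CC) \<subseteq> p"
  then have "p \<in> ufs_containing (\<Inter>C)" if "C \<in> CC" for C
    using that unfolding ufs_containing_def by blast
  then show "p \<in> \<Inter>CC"
    using assms(2) uf_closed_eq by blast
qed

lemma uf_closed_Int:
  assumes "uf_closed A" "uf_closed B"
  shows "uf_closed (A \<inter> B)"
proof -
  have "uf_closed (\<Inter>{A, B})"
    by (rule uf_closed_Inter) (use assms in auto)
  then show ?thesis
    by simp
qed

lemma uf_closed_bclosure: "uf_closed (bclosure A)"
proof -
  have "bclosure A = ufs_containing {A}"
    unfolding bclosure_def ufs_containing_def by simp
  then show ?thesis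
    by simp
qed

lemma uf_closed_deltaS: "uf_closed (deltaS op)"
proof -
  have "deltaS op = ufs_containing (range (phi op))"
    unfolding deltaS_def bclosure_def ufs_containing_def by blast
  then show ?thesis
    by simp
qed

lemma directed_finite_subset_Inter:
  assumes "CC \<noteq> {}" and directed: "\<And>X Y. X \<in> CC \<Longrightarrow> Y \<in> CC \<Longrightarrow> \<exists>Z\<in>CC. Z \<subseteq> X \<inter> Y"
  shows "finite H \<Longrightarrow> H \<subseteq> (\<Union>C\<in>CC. \<Inter>C) \<Longrightarrow> \<exists>Z\<in>CC. H \<subseteq> \<Inter>Z"
proof (induction H rule: finite_induct)
  case empty
  then show ?case
    using assms(1) by blast
next
  case (insert A H)
  then have "A \<in> (\<Union>C\<in>CC. \<Inter>C)" "H \<subseteq> (\<Union>C\<in>CC. \<Inter>C)"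
    by simp_all
  then obtain C Z where "C \<in> CC" "A \<in> \<Inter>C" "Z \<in> CC" "H \<subseteq> \<Inter>Z"
    using insert.IH by blast
  moreover obtain Z' where "Z' \<in> CC" "Z' \<subseteq> C \<inter> Z"
    using directed \<open>C \<in> CC\<close> \<open>Z \<in> CC\<close> by blast
  moreover have "\<Inter>C \<subseteq> \<Inter>Z'" "\<Inter>Z \<subseteq> \<Inter>Z'"
    using \<open>Z' \<subseteq> C \<inter> Z\<close> by (simp_all add: Inter_anti_mono)
  ultimately have "Z' \<in> CC" "A \<in> \<Inter>Z'" "H \<subseteq> \<Inter>Z'"
    by auto
  then show ?case
    by auto
qed

lemma uf_closed_directed_Inter_nonempty:
  assumes "CC \<noteq> {}" and closed: "\<And>C. C \<in> CC \<Longrightarrow> uf_closed C \<and> C \<noteq> {}"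
    and directed: "\<And>X Y. X \<in> CC \<Longrightarrow> Y \<in> CC \<Longrightarrow> \<exists>Z\<in>CC. Z \<subseteq> X \<inter> Y"
  shows "\<Inter>CC \<noteq> {}"
proof -
  have "fip (\<Union>C\<in>CC. \<Inter>C)"
    unfolding fip_def
  proof (intro allI impI)
    fix H assume "finite H" "H \<subseteq> (\<Union>C\<in>CC. \<Inter>C)"
    then obtain Z where "Z \<in> CC" "H \<subseteq> \<Inter>Z"
      using directed_finite_subset_Inter[OF assms(1) directed] by blast
    then obtain p where "p \<in> Z"
      using closed by blast
    then have "is_ultrafilter p"
      using uf_closed_subset_betaS closed[OF \<open>Z \<in> CC\<close>] unfolding betaS_def by auto
    moreover have "\<Inter>H \<in> p"
      using ultrafilter_Inter[OF \<open>is_ultrafilter p\<close> \<open>finite H\<close>] \<open>H \<subseteq> \<Inter>Z\<close> \<open>p \<in> Z\<close> by auto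
    ultimately show "\<Inter>H \<noteq> {}"
      using ultrafilter_empty by metis
  qed
  then obtain u where "is_ultrafilter u" "(\<Union>C\<in>CC. \<Inter>C) \<subseteq> u"
    using ultrafilter_exists by blast
  then have "u \<in> ufs_containing (\<Inter>C)" if "C \<in> CC" for C
    using that unfolding ufs_containing_def betaS_def by auto
  then have "u \<in> \<Inter>CC"
    using closed uf_closed_eq by auto
  then show ?thesis
    by blast
qed

lemma subset_Zorn_nonempty_minimal:
  assumes "AA \<noteq> {}" and chains: "\<And>C. C \<noteq> {} \<Longrightarrow> subset.chain AA C \<Longrightarrow> \<Inter>C \<in> AA"
  shows "\<exists>M\<in>AA. \<forall>X\<in>AA. X \<subseteq> M \<longrightarrow> X = M"
proof -
  have "\<exists>M\<in>uminus ` AA. \<forall>X\<in>uminus ` AA. M \<subseteq> X \<longrightarrow> X = M"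
  proof (rule subset_Zorn_nonempty)
    fix C assume "C \<noteq> {}" "subset.chain (uminus ` AA) C"
    then have "C \<subseteq> uminus ` AA" and chain: "\<forall>X\<in>C. \<forall>Y\<in>C. X \<subseteq> Y \<or> Y \<subseteq> X"
      unfolding subset_chain_def by blast+
    have "uminus ` C \<subseteq> uminus ` uminus ` AA"
      using \<open>C \<subseteq> uminus ` AA\<close> by (rule image_mono)
    then have "uminus ` C \<subseteq> AA"
      by (simp add: image_image)
    moreover have "\<forall>X\<in>uminus ` C. \<forall>Y\<in>uminus ` C. X \<subseteq> Y \<or> Y \<subseteq> X"
      using chain by simp
    ultimately have "subset.chain AA (uminus ` C)" "uminus ` C \<noteq> {}"
      using \<open>C \<noteq> {}\<close> unfolding subset_chain_def by simp_all
    have "\<Union>C = - \<Inter>(uminus ` C)"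
      by (simp add: uminus_Inf image_image)
    also have "\<dots> \<in> uminus ` AA"
      by (intro imageI chains) fact+
    finally show "\<Union>C \<in> uminus ` AA" .
  qed (use assms in simp)
  then obtain N where "N \<in> uminus ` AA" and max: "\<forall>X\<in>uminus ` AA. N \<subseteq> X \<longrightarrow> X = N" ..
  from \<open>N \<in> uminus ` AA\<close> obtain M where "M \<in> AA" "N = - M"
    by (rule imageE)
  have "X = M" if "X \<in> AA" "X \<subseteq> M" for X
    using max[rule_format, OF imageI[OF that(1)]] that(2) \<open>N = - M\<close> by simp
  then show ?thesis
    using \<open>M \<in> AA\<close> by blast
qed

lemma minimal_uf_closed_exists:
  assumes "A \<in> AA" and closed: "\<And>X. X \<in> AA \<Longrightarrow> uf_closed X \<and> X \<noteq> {}"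
    and Inter: "\<And>C. C \<noteq> {} \<Longrightarrow> C \<subseteq> AA \<Longrightarrow> \<Inter>C \<noteq> {} \<Longrightarrow> \<Inter>C \<in> AA"
  shows "\<exists>M\<in>AA. \<forall>X\<in>AA. X \<subseteq> M \<longrightarrow> X = M"
proof (rule subset_Zorn_nonempty_minimal)
  fix C assume "C \<noteq> {}" "subset.chain AA C"
  then have "C \<subseteq> AA" and chain: "\<And>X Y. X \<in> C \<Longrightarrow> Y \<in> C \<Longrightarrow> X \<subseteq> Y \<or> Y \<subseteq> X"
    unfolding subset_chain_def by blast+
  have "\<Inter>C \<noteq> {}"
  proof (rule uf_closed_directed_Inter_nonempty)
    show "uf_closed X \<and> X \<noteq> {}" if "X \<in> C" for X
      using that \<open>C \<subseteq> AA\<close> closed by blast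
    show "\<exists>Z\<in>C. Z \<subseteq> X \<inter> Y" if "X \<in> C" "Y \<in> C" for X Y
      using chain[OF that] that by blast
  qed fact
  then show "\<Inter>C \<in> AA"
    using Inter \<open>C \<noteq> {}\<close> \<open>C \<subseteq> AA\<close> by blast
qed (use assms in blast)

text \<open>Both \<open>h~\<close> and the right translations \<open>p \<mapsto> p * q\<close> of \<open>\<delta>S\<close> have the form
  \<open>p \<mapsto> {B. \<Phi> B \<in> p}\<close> for a Boolean homomorphism \<open>\<Phi>\<close>.\<close>

definition boolean_hom :: "('b set \<Rightarrow> 'a set) \<Rightarrow> bool" where
  "boolean_hom \<Phi> \<longleftrightarrow> \<Phi> UNIV = UNIV \<and> (\<forall>A B. \<Phi> (A \<inter> B) = \<Phi> A \<inter> \<Phi> B) \<and> (\<forall>A. \<Phi> (- A) = - \<Phi> A)"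

lemma boolean_hom_vimage: "boolean_hom (vimage h)"
  unfolding boolean_hom_def by auto

lemma ultrafilter_boolean_hom:
  assumes p: "is_ultrafilter p" and \<Phi>: "boolean_hom \<Phi>"
  shows "is_ultrafilter {B. \<Phi> B \<in> p}"
proof -
  have UNIV: "\<Phi> UNIV = UNIV" and Int: "\<And>A B. \<Phi> (A \<inter> B) = \<Phi> A \<inter> \<Phi> B"
    and Compl: "\<And>A. \<Phi> (- A) = - \<Phi> A"
    using \<Phi> unfolding boolean_hom_def by blast+
  have "\<Phi> {} = {}"
    using UNIV Compl[of UNIV] by simp
  have mono: "\<Phi> A \<subseteq> \<Phi> B" if "A \<subseteq> B" for A B
    using Int[of A B] that by (simp add: le_iff_inf)
  show ?thesis
    unfolding is_ultrafilter_def mem_Collect_eq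
  proof (intro conjI allI impI)
    show "\<Phi> UNIV \<in> p" "\<Phi> {} \<notin> p"
      using \<open>\<Phi> {} = {}\<close> UNIV ultrafilter_UNIV[OF p] ultrafilter_empty[OF p] by simp_all
  next
    fix A B assume "\<Phi> A \<in> p \<and> A \<subseteq> B"
    then show "\<Phi> B \<in> p"
      using ultrafilter_mono[OF p, of "\<Phi> A" "\<Phi> B"] mono[of A B] by simp
  next
    fix A B assume "\<Phi> A \<in> p \<and> \<Phi> B \<in> p"
    then show "\<Phi> (A \<inter> B) \<in> p"
      using Int ultrafilter_Int_iff[OF p] by simp
  next
    fix A show "\<Phi> A \<in> p \<or> \<Phi> (- A) \<in> p"
      using Compl ultrafilter_Compl_iff[OF p] by simp
  qed
qed

lemma uf_closed_boolean_hom_fiber: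
  assumes "is_ultrafilter q" "boolean_hom \<Phi>"
  shows "uf_closed {p \<in> betaS. {B. \<Phi> B \<in> p} = q}"
proof -
  have "{p \<in> betaS. {B. \<Phi> B \<in> p} = q} = ufs_containing (\<Phi> ` q)"
  proof (rule set_eqI)
    fix p
    show "p \<in> {p \<in> betaS. {B. \<Phi> B \<in> p} = q} \<longleftrightarrow> p \<in> ufs_containing (\<Phi> ` q)"
    proof (cases "is_ultrafilter p")
      case True
      then have "{B. \<Phi> B \<in> p} = q \<longleftrightarrow> q \<subseteq> {B. \<Phi> B \<in> p}"
        using ultrafilter_eqI[OF assms(1) ultrafilter_boolean_hom[OF True assms(2)]] by blast
      then show ?thesis
        using True unfolding ufs_containing_def betaS_def by auto
    qed (simp add: ufs_containing_def betaS_def)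
  qed
  then show ?thesis
    by simp
qed

lemma boolean_hom_pullback_eq_exists:
  assumes A: "uf_closed A" and \<Phi>: "boolean_hom \<Phi>" and p: "is_ultrafilter p"
    and hits: "\<And>B. B \<in> p \<Longrightarrow> \<exists>r\<in>A. \<Phi> B \<in> r"
  shows "\<exists>r\<in>A. {B. \<Phi> B \<in> r} = p"
proof -
  define CC where "CC = (\<lambda>B. A \<inter> bclosure (\<Phi> B)) ` p"
  have "\<Inter>CC \<noteq> {}"
  proof (rule uf_closed_directed_Inter_nonempty)
    show "CC \<noteq> {}"
      unfolding CC_def using ultrafilter_UNIV[OF p] by blast
    show "uf_closed C \<and> C \<noteq> {}" if "C \<in> CC" for C
      using that hits uf_closed_Int[OF A uf_closed_bclosure] uf_closed_subset_betaS[OF A]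
      unfolding CC_def bclosure_def by blast
  next
    fix X Y assume "X \<in> CC" "Y \<in> CC"
    then obtain B1 B2 where "B1 \<in> p" "B2 \<in> p"
      and "X = A \<inter> bclosure (\<Phi> B1)" "Y = A \<inter> bclosure (\<Phi> B2)"
      unfolding CC_def by blast
    moreover have "A \<inter> bclosure (\<Phi> (B1 \<inter> B2)) \<subseteq> A \<inter> bclosure (\<Phi> B1) \<inter> bclosure (\<Phi> B2)"
      using ultrafilter_Int_iff \<Phi> unfolding boolean_hom_def bclosure_def betaS_def by auto
    moreover have "A \<inter> bclosure (\<Phi> (B1 \<inter> B2)) \<in> CC"
      using \<open>B1 \<in> p\<close> \<open>B2 \<in> p\<close> ultrafilter_Int_iff[OF p] unfolding CC_def by blast
    ultimately show "\<exists>Z\<in>CC. Z \<subseteq> X \<inter> Y"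
      by blast
  qed
  then obtain r where r: "r \<in> \<Inter>CC"
    by blast
  then have "r \<in> A"
    using ultrafilter_UNIV[OF p] unfolding CC_def by blast
  moreover have "p \<subseteq> {B. \<Phi> B \<in> r}"
    using r unfolding CC_def bclosure_def by blast
  then have "p = {B. \<Phi> B \<in> r}"
    using ultrafilter_eqI p ultrafilter_boolean_hom[OF _ \<Phi>] \<open>r \<in> A\<close> uf_closed_subset_betaS[OF A]
    unfolding betaS_def by blast
  ultimately show ?thesis
    by blast
qed

lemma uf_closed_boolean_hom_image:
  assumes A: "uf_closed A" and \<Phi>: "boolean_hom \<Phi>"
  shows "uf_closed ((\<lambda>r. {B. \<Phi> B \<in> r}) ` A)"
proof (rule uf_closedI)
  have ultra: "is_ultrafilter {B. \<Phi> B \<in> r}" if "r \<in> A" for r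
    using that A \<Phi> ultrafilter_boolean_hom uf_closed_subset_betaS unfolding betaS_def by blast
  then show "(\<lambda>r. {B. \<Phi> B \<in> r}) ` A \<subseteq> betaS"
    unfolding betaS_def by blast
  fix p assume "p \<in> betaS" and p: "\<Inter>((\<lambda>r. {B. \<Phi> B \<in> r}) ` A) \<subseteq> p"
  then have "is_ultrafilter p"
    unfolding betaS_def by simp
  have "\<exists>r\<in>A. \<Phi> B \<in> r" if "B \<in> p" for B
  proof (rule ccontr)
    assume "\<not> (\<exists>r\<in>A. \<Phi> B \<in> r)"
    then have "- B \<in> {B. \<Phi> B \<in> r}" if "r \<in> A" for r
      using that ultra[OF that] ultrafilter_Compl_iff by blast
    then have "- B \<in> p"
      using p by blast
    then show False
      using \<open>B \<in> p\<close> ultrafilter_Compl_iff[OF \<open>is_ultrafilter p\<close>] by blast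
  qed
  then show "p \<in> (\<lambda>r. {B. \<Phi> B \<in> r}) ` A"
    using boolean_hom_pullback_eq_exists[OF A \<Phi> \<open>is_ultrafilter p\<close>] by (metis image_eqI)
qed

section \<open>Minimal left ideals and the smallest ideal\<close>

locale semigroup_on =
  fixes D :: "'c set" and m :: "'c \<Rightarrow> 'c \<Rightarrow> 'c"
  assumes mult_closed: "x \<in> D \<Longrightarrow> y \<in> D \<Longrightarrow> m x y \<in> D"
    and mult_assoc: "x \<in> D \<Longrightarrow> y \<in> D \<Longrightarrow> z \<in> D \<Longrightarrow> m (m x y) z = m x (m y z)"

definition left_ideal :: "'c set \<Rightarrow> ('c \<Rightarrow> 'c \<Rightarrow> 'c) \<Rightarrow> 'c set \<Rightarrow> bool" where
  "left_ideal D m L \<longleftrightarrow> L \<noteq> {} \<and> L \<subseteq> D \<and> (\<forall>x\<in>D. \<forall>y\<in>L. m x y \<in> L)"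

definition minimal_left_ideal :: "'c set \<Rightarrow> ('c \<Rightarrow> 'c \<Rightarrow> 'c) \<Rightarrow> 'c set \<Rightarrow> bool" where
  "minimal_left_ideal D m L \<longleftrightarrow> left_ideal D m L \<and> (\<forall>J. left_ideal D m J \<longrightarrow> J \<subseteq> L \<longrightarrow> J = L)"

lemma left_idealD:
  assumes "left_ideal D m L"
  shows "L \<noteq> {}" "L \<subseteq> D" "x \<in> D \<Longrightarrow> y \<in> L \<Longrightarrow> m x y \<in> L"
  using assms unfolding left_ideal_def by blast+

lemma minimal_left_idealD:
  assumes "minimal_left_ideal D m L"
  shows "left_ideal D m L" "left_ideal D m J \<Longrightarrow> J \<subseteq> L \<Longrightarrow> J = L"
  using assms unfolding minimal_left_ideal_def by blast+

lemma left_ideal_Inter: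
  assumes "C \<noteq> {}" "\<And>L. L \<in> C \<Longrightarrow> left_ideal D m L" "\<Inter>C \<noteq> {}"
  shows "left_ideal D m (\<Inter>C)"
  using assms unfolding left_ideal_def by blast

lemma sg_idealD:
  assumes "sg_ideal D m I"
  shows "I \<noteq> {}" "I \<subseteq> D" "x \<in> I \<Longrightarrow> y \<in> D \<Longrightarrow> m x y \<in> I" "x \<in> I \<Longrightarrow> y \<in> D \<Longrightarrow> m y x \<in> I"
  using assms unfolding sg_ideal_def by blast+

lemma Kmin_subset: "sg_ideal D m I \<Longrightarrow> Kmin D m \<subseteq> I"
  unfolding Kmin_def by blast

lemma subset_Kmin: "(\<And>I. sg_ideal D m I \<Longrightarrow> X \<subseteq> I) \<Longrightarrow> X \<subseteq> Kmin D m"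
  unfolding Kmin_def by blast

context semigroup_on
begin

lemma left_ideal_principal:
  assumes "a \<in> D"
  shows "left_ideal D m ((\<lambda>x. m x a) ` D)"
  unfolding left_ideal_def
proof (intro conjI ballI)
  show "(\<lambda>x. m x a) ` D \<noteq> {}" "(\<lambda>x. m x a) ` D \<subseteq> D"
    using assms mult_closed by auto
  fix z y assume "z \<in> D" "y \<in> (\<lambda>x. m x a) ` D"
  then obtain x where "x \<in> D" "y = m x a"
    by blast
  then have "m z y = m (m z x) a"
    using mult_assoc \<open>z \<in> D\<close> assms by simp
  then show "m z y \<in> (\<lambda>x. m x a) ` D"
    using mult_closed \<open>z \<in> D\<close> \<open>x \<in> D\<close> by blast
qed

lemma minimal_left_ideal_principal:
  assumes L: "minimal_left_ideal D m L" and "a \<in> L"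
  shows "(\<lambda>x. m x a) ` D = L"
proof (rule minimal_left_idealD(2)[OF L])
  have "a \<in> D"
    using assms left_idealD(2)[OF minimal_left_idealD(1)[OF L]] by blast
  then show "left_ideal D m ((\<lambda>x. m x a) ` D)"
    by (rule left_ideal_principal)
  show "(\<lambda>x. m x a) ` D \<subseteq> L"
    using left_idealD(3)[OF minimal_left_idealD(1)[OF L]] \<open>a \<in> L\<close> by blast
qed

lemma minimal_left_ideal_mult_right:
  assumes L: "minimal_left_ideal D m L" and "a \<in> D"
  shows "minimal_left_ideal D m ((\<lambda>y. m y a) ` L)"
proof -
  have "L \<subseteq> D"
    using left_idealD(2)[OF minimal_left_idealD(1)[OF L]] .
  have "left_ideal D m ((\<lambda>y. m y a) ` L)"
    unfolding left_ideal_def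
  proof (intro conjI ballI)
    show "(\<lambda>y. m y a) ` L \<noteq> {}"
      using left_idealD(1)[OF minimal_left_idealD(1)[OF L]] by blast
    show "(\<lambda>y. m y a) ` L \<subseteq> D"
      using \<open>L \<subseteq> D\<close> \<open>a \<in> D\<close> mult_closed by blast
    fix z w assume "z \<in> D" "w \<in> (\<lambda>y. m y a) ` L"
    then obtain y where "y \<in> L" "w = m y a"
      by blast
    then have "m z w = m (m z y) a"
      using mult_assoc \<open>z \<in> D\<close> \<open>a \<in> D\<close> \<open>L \<subseteq> D\<close> by auto
    then show "m z w \<in> (\<lambda>y. m y a) ` L"
      using left_idealD(3)[OF minimal_left_idealD(1)[OF L] \<open>z \<in> D\<close> \<open>y \<in> L\<close>] by blast
  qed
  moreover have "(\<lambda>y. m y a) ` L \<subseteq> J" if J: "left_ideal D m J" "J \<subseteq> (\<lambda>y. m y a) ` L" for J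
  proof -
    obtain y where "y \<in> L" "m y a \<in> J"
      using J left_idealD(1)[OF J(1)] by blast
    have "(\<lambda>y. m y a) ` L = (\<lambda>y. m y a) ` ((\<lambda>x. m x y) ` D)"
      using minimal_left_ideal_principal[OF L \<open>y \<in> L\<close>] by simp
    also have "\<dots> = (\<lambda>x. m x (m y a)) ` D"
      using mult_assoc \<open>y \<in> L\<close> \<open>L \<subseteq> D\<close> \<open>a \<in> D\<close> by (auto simp: image_image)
    also have "\<dots> \<subseteq> J"
      using left_idealD(3)[OF J(1) _ \<open>m y a \<in> J\<close>] by blast
    finally show ?thesis .
  qed
  ultimately show ?thesis
    unfolding minimal_left_ideal_def by blast
qed

lemma minimal_left_ideal_subset_sg_ideal:
  assumes L: "minimal_left_ideal D m L" and I: "sg_ideal D m I"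
  shows "L \<subseteq> I"
proof -
  obtain y i where "y \<in> L" "i \<in> I"
    using left_idealD(1)[OF minimal_left_idealD(1)[OF L]] sg_idealD(1)[OF I] by blast
  have "i \<in> D" "y \<in> D"
    using \<open>i \<in> I\<close> \<open>y \<in> L\<close> sg_idealD(2)[OF I] left_idealD(2)[OF minimal_left_idealD(1)[OF L]]
    by blast+
  then have "m i y \<in> L" "m i y \<in> I"
    using left_idealD(3)[OF minimal_left_idealD(1)[OF L]] sg_idealD(3)[OF I] \<open>y \<in> L\<close> \<open>i \<in> I\<close>
    by blast+
  have "L = (\<lambda>x. m x (m i y)) ` D"
    using minimal_left_ideal_principal[OF L \<open>m i y \<in> L\<close>] by simp
  also have "\<dots> \<subseteq> I"
    using sg_idealD(4)[OF I \<open>m i y \<in> I\<close>] by blast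
  finally show ?thesis .
qed

lemma minimal_left_ideal_subset_Kmin:
  "minimal_left_ideal D m L \<Longrightarrow> L \<subseteq> Kmin D m"
  using minimal_left_ideal_subset_sg_ideal by (rule subset_Kmin)

lemma sg_ideal_Kmin:
  assumes L: "minimal_left_ideal D m L"
  shows "sg_ideal D m (Kmin D m)"
  unfolding sg_ideal_def
proof (intro conjI ballI)
  show "Kmin D m \<noteq> {}"
    using minimal_left_ideal_subset_Kmin[OF L] left_idealD(1)[OF minimal_left_idealD(1)[OF L]]
    by blast
  have "sg_ideal D m D"
    using left_idealD(1,2)[OF minimal_left_idealD(1)[OF L]] mult_closed
    unfolding sg_ideal_def by blast
  then show "Kmin D m \<subseteq> D"
    by (rule Kmin_subset)
  fix x y assume "x \<in> Kmin D m" "y \<in> D"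
  have "m x y \<in> I \<and> m y x \<in> I" if I: "sg_ideal D m I" for I
    using sg_idealD(3,4)[OF I _ \<open>y \<in> D\<close>] Kmin_subset[OF I] \<open>x \<in> Kmin D m\<close> by blast
  then show "m x y \<in> Kmin D m" "m y x \<in> Kmin D m"
    unfolding Kmin_def by blast+
qed

lemma Kmin_subset_Union_minimal_left_ideals:
  assumes L: "minimal_left_ideal D m L"
  shows "Kmin D m \<subseteq> \<Union>{L. minimal_left_ideal D m L}"
proof (rule Kmin_subset)
  show "sg_ideal D m (\<Union>{L. minimal_left_ideal D m L})"
    unfolding sg_ideal_def
  proof (intro conjI ballI)
    show "\<Union>{L. minimal_left_ideal D m L} \<noteq> {}"
      using L left_idealD(1)[OF minimal_left_idealD(1)[OF L]] by blast
    show "\<Union>{L. minimal_left_ideal D m L} \<subseteq> D"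
      using left_idealD(2)[OF minimal_left_idealD(1)] by blast
    fix x y assume "x \<in> \<Union>{L. minimal_left_ideal D m L}" "y \<in> D"
    then obtain L' where L': "minimal_left_ideal D m L'" "x \<in> L'"
      by blast
    show "m y x \<in> \<Union>{L. minimal_left_ideal D m L}"
      using left_idealD(3)[OF minimal_left_idealD(1)[OF L'(1)] \<open>y \<in> D\<close> L'(2)] L'(1) by blast
    show "m x y \<in> \<Union>{L. minimal_left_ideal D m L}"
      using minimal_left_ideal_mult_right[OF L'(1) \<open>y \<in> D\<close>] L'(2) by blast
  qed
qed

end

locale semigroup_epimorphism = S: semigroup_on D m + T: semigroup_on D' m'
  for D :: "'c set" and m and D' :: "'d set" and m' +
  fixes f :: "'c \<Rightarrow> 'd"
  assumes onto: "f ` D = D'"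
    and hom: "x \<in> D \<Longrightarrow> y \<in> D \<Longrightarrow> f (m x y) = m' (f x) (f y)"
begin

lemma sg_ideal_image:
  assumes I: "sg_ideal D m I"
  shows "sg_ideal D' m' (f ` I)"
  unfolding sg_ideal_def
proof (intro conjI ballI)
  show "f ` I \<noteq> {}" "f ` I \<subseteq> D'"
    using sg_idealD(1,2)[OF I] onto by auto
  fix x y assume "x \<in> f ` I" "y \<in> D'"
  then obtain a b where "a \<in> I" "x = f a" "b \<in> D" "y = f b"
    using onto by blast
  moreover have "a \<in> D"
    using \<open>a \<in> I\<close> sg_idealD(2)[OF I] by blast
  ultimately show "m' x y \<in> f ` I" "m' y x \<in> f ` I"
    using hom sg_idealD(3,4)[OF I] by (metis image_eqI)+
qed

lemma sg_ideal_vimage: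
  assumes I: "sg_ideal D' m' I"
  shows "sg_ideal D m (D \<inter> f -` I)"
  unfolding sg_ideal_def
proof (intro conjI ballI)
  show "D \<inter> f -` I \<noteq> {}"
    using sg_idealD(1,2)[OF I] onto by blast
  show "D \<inter> f -` I \<subseteq> D"
    by blast
  fix x y assume "x \<in> D \<inter> f -` I" "y \<in> D"
  moreover have "f y \<in> D'"
    using \<open>y \<in> D\<close> onto by blast
  ultimately show "m x y \<in> D \<inter> f -` I" "m y x \<in> D \<inter> f -` I"
    using hom S.mult_closed sg_idealD(3,4)[OF I] by auto
qed

lemma minimal_left_ideal_image:
  assumes L: "minimal_left_ideal D m L"
  shows "minimal_left_ideal D' m' (f ` L)"
proof -
  have "L \<subseteq> D"
    using left_idealD(2)[OF minimal_left_idealD(1)[OF L]] .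
  have "left_ideal D' m' (f ` L)"
    unfolding left_ideal_def
  proof (intro conjI ballI)
    show "f ` L \<noteq> {}" "f ` L \<subseteq> D'"
      using left_idealD(1)[OF minimal_left_idealD(1)[OF L]] \<open>L \<subseteq> D\<close> onto by auto
    fix z w assume "z \<in> D'" "w \<in> f ` L"
    then obtain x y where "x \<in> D" "z = f x" "y \<in> L" "w = f y"
      using onto by blast
    then have "m' z w = f (m x y)"
      using hom \<open>L \<subseteq> D\<close> by auto
    then show "m' z w \<in> f ` L"
      using left_idealD(3)[OF minimal_left_idealD(1)[OF L] \<open>x \<in> D\<close> \<open>y \<in> L\<close>] by blast
  qed
  moreover have "f ` L \<subseteq> J" if J: "left_ideal D' m' J" "J \<subseteq> f ` L" for J
  proof -
    obtain y where "y \<in> L" "f y \<in> J"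
      using J left_idealD(1)[OF J(1)] by blast
    have "f ` L = f ` ((\<lambda>x. m x y) ` D)"
      using S.minimal_left_ideal_principal[OF L \<open>y \<in> L\<close>] by simp
    also have "\<dots> = (\<lambda>x. m' x (f y)) ` D'"
      using hom \<open>y \<in> L\<close> \<open>L \<subseteq> D\<close> onto by (auto simp: image_image)
    also have "\<dots> \<subseteq> J"
      using left_idealD(3)[OF J(1) _ \<open>f y \<in> J\<close>] by blast
    finally show ?thesis .
  qed
  ultimately show ?thesis
    unfolding minimal_left_ideal_def by blast
qed

lemma Kmin_image:
  assumes L: "minimal_left_ideal D m L"
  shows "f ` Kmin D m = Kmin D' m'"
proof
  show "f ` Kmin D m \<subseteq> Kmin D' m'"
  proof (rule subset_Kmin)
    fix I assume "sg_ideal D' m' I"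
    then have "Kmin D m \<subseteq> D \<inter> f -` I"
      by (intro Kmin_subset sg_ideal_vimage)
    then show "f ` Kmin D m \<subseteq> I"
      by blast
  qed
  show "Kmin D' m' \<subseteq> f ` Kmin D m"
    by (intro Kmin_subset sg_ideal_image S.sg_ideal_Kmin[OF L])
qed

lemma Kmin_mem_image_minimal_left_ideal:
  assumes L0: "minimal_left_ideal D m L0" and "q \<in> Kmin D' m'"
  shows "\<exists>L. minimal_left_ideal D m L \<and> q \<in> f ` L"
proof -
  obtain L' where L': "minimal_left_ideal D' m' L'" "q \<in> L'"
    using T.Kmin_subset_Union_minimal_left_ideals[OF minimal_left_ideal_image[OF L0]] \<open>q \<in> Kmin D' m'\<close>
    by blast
  then obtain x where "x \<in> D" "f x = q"
    using left_idealD(2)[OF minimal_left_idealD(1)[OF L'(1)]] onto by blast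
  define L where "L = (\<lambda>y. m y x) ` L0"
  have L: "minimal_left_ideal D m L"
    unfolding L_def using S.minimal_left_ideal_mult_right[OF L0 \<open>x \<in> D\<close>] .
  have "L0 \<subseteq> D"
    using left_idealD(2)[OF minimal_left_idealD(1)[OF L0]] .
  then have "f ` L = (\<lambda>z. m' z q) ` (f ` L0)"
    unfolding L_def image_image using hom \<open>x \<in> D\<close> \<open>f x = q\<close> by (intro image_cong) auto
  also have "\<dots> \<subseteq> L'"
    using left_idealD(3)[OF minimal_left_idealD(1)[OF L'(1)] _ \<open>q \<in> L'\<close>] \<open>L0 \<subseteq> D\<close> onto by blast
  finally have "f ` L = L'"
    using minimal_left_idealD(2)[OF L'(1) minimal_left_idealD(1)[OF minimal_left_ideal_image[OF L]]]
    by blast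
  then show ?thesis
    using L \<open>q \<in> L'\<close> by blast
qed

end

section \<open>The semigroup \<open>\<delta>S\<close>\<close>

lemma deltaS_iff: "p \<in> deltaS op \<longleftrightarrow> is_ultrafilter p \<and> (\<forall>x. phi op x \<in> p)"
  unfolding deltaS_def bclosure_def betaS_def by auto

lemma deltaS_subset_betaS: "deltaS op \<subseteq> betaS"
  unfolding deltaS_def bclosure_def by blast

lemma partial_semigroup_assoc:
  assumes "partial_semigroup op" "op u v = Some w"
  shows "op w t = Option.bind (op v t) (op u)"
  using assms unfolding partial_semigroup_def by (metis bind.simps(2))

lemma sinv_Int: "sinv op s (A \<inter> B) = sinv op s A \<inter> sinv op s B"
  unfolding sinv_def by auto

lemma sinv_Compl: "sinv op s (- A) = phi op s - sinv op s A"
  unfolding sinv_def by auto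

lemma sinv_UNIV: "sinv op s UNIV = phi op s"
  unfolding sinv_def by auto

lemma sinv_sinv:
  assumes "partial_semigroup op" "op u v = Some w"
  shows "sinv op v (sinv op u A) = sinv op w A"
proof (rule set_eqI)
  fix t
  show "t \<in> sinv op v (sinv op u A) \<longleftrightarrow> t \<in> sinv op w A"
    using partial_semigroup_assoc[OF assms, of t]
    unfolding sinv_def phi_def by (cases "op v t") auto
qed

lemma boolean_hom_sinv:
  assumes "q \<in> deltaS op"
  shows "boolean_hom (\<lambda>A. {s. sinv op s A \<in> q})"
proof -
  have "is_ultrafilter q" "\<And>s. phi op s \<in> q"
    using assms unfolding deltaS_iff by blast+
  then show ?thesis
    unfolding boolean_hom_def sinv_Int sinv_Compl sinv_UNIV Diff_eq
    by (auto simp: ultrafilter_Int_iff ultrafilter_Compl_iff)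
qed

lemma ustar_in_betaS: "p \<in> betaS \<Longrightarrow> q \<in> deltaS op \<Longrightarrow> ustar op p q \<in> betaS"
  unfolding ustar_def betaS_def using ultrafilter_boolean_hom boolean_hom_sinv by blast

lemma ustar_in_deltaS:
  assumes op: "partial_semigroup op" and "p \<in> deltaS op" "q \<in> deltaS op"
  shows "ustar op p q \<in> deltaS op"
proof -
  have "is_ultrafilter p" "is_ultrafilter q" and phi: "\<And>s. phi op s \<in> p" "\<And>s. phi op s \<in> q"
    using assms(2,3) unfolding deltaS_iff by blast+
  have "phi op x \<subseteq> {s. sinv op s (phi op x) \<in> q}" for x
  proof
    fix s assume "s \<in> phi op x"
    then obtain w where w: "op x s = Some w"
      unfolding phi_def by blast
    have "phi op s \<inter> phi op w \<subseteq> sinv op s (phi op x)"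
      unfolding sinv_def phi_def using partial_semigroup_assoc[OF op w] by fastforce
    moreover have "phi op s \<inter> phi op w \<in> q"
      using phi ultrafilter_Int_iff[OF \<open>is_ultrafilter q\<close>] by blast
    ultimately show "s \<in> {s. sinv op s (phi op x) \<in> q}"
      using ultrafilter_mono[OF \<open>is_ultrafilter q\<close>] by blast
  qed
  then have "phi op x \<in> ustar op p q" for x
    unfolding ustar_def using phi ultrafilter_mono[OF \<open>is_ultrafilter p\<close>] by blast
  moreover have "ustar op p q \<in> betaS"
    using assms(2,3) ustar_in_betaS unfolding deltaS_iff betaS_def by blast
  ultimately show ?thesis
    unfolding deltaS_iff betaS_def by blast
qed

lemma ustar_assoc:
  assumes op: "partial_semigroup op" and "q \<in> deltaS op"
  shows "ustar op (ustar op p q) r = ustar op p (ustar op q r)"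
proof -
  have "is_ultrafilter q" "\<And>s. phi op s \<in> q"
    using assms(2) unfolding deltaS_iff by blast+
  have "sinv op u {s. sinv op s A \<in> r} = {v. sinv op v (sinv op u A) \<in> r} \<inter> phi op u" for u A
    using sinv_sinv[OF op] unfolding sinv_def[of op u "{s. sinv op s A \<in> r}"] phi_def by auto
  then have "sinv op u {s. sinv op s A \<in> r} \<in> q \<longleftrightarrow> {v. sinv op v (sinv op u A) \<in> r} \<in> q" for u A
    using ultrafilter_Int_iff[OF \<open>is_ultrafilter q\<close>] \<open>\<And>s. phi op s \<in> q\<close> by simp
  then show ?thesis
    unfolding ustar_def by simp
qed

lemma semigroup_on_deltaS: "partial_semigroup op \<Longrightarrow> semigroup_on (deltaS op) (ustar op)"
  by unfold_locales (simp_all add: ustar_in_deltaS ustar_assoc)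

lemma uf_closed_ustar_image:
  "uf_closed A \<Longrightarrow> q \<in> deltaS op \<Longrightarrow> uf_closed ((\<lambda>p. ustar op p q) ` A)"
  unfolding ustar_def by (rule uf_closed_boolean_hom_image[OF _ boolean_hom_sinv])

lemma uf_closed_ustar_fixed:
  assumes "q \<in> deltaS op"
  shows "uf_closed {p \<in> betaS. ustar op p q = q}"
  using uf_closed_boolean_hom_fiber[OF _ boolean_hom_sinv[OF assms]] assms
  unfolding ustar_def deltaS_iff by blast

lemma deltaS_nonempty:
  assumes "adequate op"
  shows "deltaS op \<noteq> {}"
proof -
  have "fip (range (phi op))"
    unfolding fip_def
  proof (intro allI impI)
    fix H assume "finite H" "H \<subseteq> range (phi op)"
    then obtain X where "finite X" "H = phi op ` X"
      by (meson finite_subset_image)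
    then show "\<Inter>H \<noteq> {}"
      using assms unfolding adequate_def sigma_def by (cases "X = {}") auto
  qed
  then obtain u where "is_ultrafilter u" "range (phi op) \<subseteq> u"
    using ultrafilter_exists by blast
  then have "u \<in> deltaS op"
    unfolding deltaS_iff by blast
  then show ?thesis
    by blast
qed

definition closed_subsemigroup :: "('a \<Rightarrow> 'a \<Rightarrow> 'a option) \<Rightarrow> 'a set set set \<Rightarrow> bool" where
  "closed_subsemigroup op N \<longleftrightarrow>
     N \<noteq> {} \<and> N \<subseteq> deltaS op \<and> uf_closed N \<and> (\<forall>a\<in>N. \<forall>b\<in>N. ustar op a b \<in> N)"

context
  fixes op :: "'a \<Rightarrow> 'a \<Rightarrow> 'a option"
  assumes op: "partial_semigroup op"
begin

interpretation \<delta>: semigroup_on "deltaS op" "ustar op"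
  by (rule semigroup_on_deltaS[OF op])

lemma uf_closed_principal_left_ideal:
  "a \<in> deltaS op \<Longrightarrow> uf_closed ((\<lambda>x. ustar op x a) ` deltaS op)"
  by (rule uf_closed_ustar_image[OF uf_closed_deltaS])

lemma minimal_left_ideal_deltaS_exists:
  assumes "adequate op"
  shows "\<exists>L. minimal_left_ideal (deltaS op) (ustar op) L"
proof -
  let ?AA = "{L. left_ideal (deltaS op) (ustar op) L \<and> uf_closed L}"
  have "\<exists>M\<in>?AA. \<forall>X\<in>?AA. X \<subseteq> M \<longrightarrow> X = M"
  proof (rule minimal_uf_closed_exists)
    show "deltaS op \<in> ?AA"
      using deltaS_nonempty[OF assms] \<delta>.mult_closed uf_closed_deltaS
      unfolding left_ideal_def by blast
    show "uf_closed X \<and> X \<noteq> {}" if "X \<in> ?AA" for X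
      using that left_idealD(1) by blast
    show "\<Inter>C \<in> ?AA" if "C \<noteq> {}" "C \<subseteq> ?AA" "\<Inter>C \<noteq> {}" for C
      using that left_ideal_Inter[of C] uf_closed_Inter[of C] by blast
  qed
  then obtain M where "M \<in> ?AA" and min: "\<forall>X\<in>?AA. X \<subseteq> M \<longrightarrow> X = M" ..
  have "M \<subseteq> J" if J: "left_ideal (deltaS op) (ustar op) J" "J \<subseteq> M" for J
  proof -
    obtain a where "a \<in> J"
      using left_idealD(1)[OF J(1)] by blast
    then have "a \<in> deltaS op"
      using left_idealD(2)[OF J(1)] by blast
    have "(\<lambda>x. ustar op x a) ` deltaS op \<subseteq> J"
      using left_idealD(3)[OF J(1) _ \<open>a \<in> J\<close>] by blast
    moreover have "(\<lambda>x. ustar op x a) ` deltaS op \<in> ?AA"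
      using \<delta>.left_ideal_principal uf_closed_principal_left_ideal \<open>a \<in> deltaS op\<close> by blast
    ultimately show "M \<subseteq> J"
      using min J(2) by (metis order_trans)
  qed
  then show ?thesis
    unfolding minimal_left_ideal_def using \<open>M \<in> ?AA\<close> by blast
qed

lemma uf_closed_minimal_left_ideal:
  assumes L: "minimal_left_ideal (deltaS op) (ustar op) L"
  shows "uf_closed L"
proof -
  obtain a where "a \<in> L"
    using left_idealD(1)[OF minimal_left_idealD(1)[OF L]] by blast
  then have "a \<in> deltaS op"
    using left_idealD(2)[OF minimal_left_idealD(1)[OF L]] by blast
  then show ?thesis
    using \<delta>.minimal_left_ideal_principal[OF L \<open>a \<in> L\<close>] uf_closed_principal_left_ideal by metis
qed

lemma minimal_closed_subsemigroup_exists: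
  assumes "closed_subsemigroup op M"
  shows "\<exists>N. N \<subseteq> M \<and> closed_subsemigroup op N \<and>
    (\<forall>X. closed_subsemigroup op X \<longrightarrow> X \<subseteq> N \<longrightarrow> X = N)"
proof -
  let ?AA = "{N. N \<subseteq> M \<and> closed_subsemigroup op N}"
  have "\<exists>N\<in>?AA. \<forall>X\<in>?AA. X \<subseteq> N \<longrightarrow> X = N"
  proof (rule minimal_uf_closed_exists)
    show "M \<in> ?AA" "\<And>X. X \<in> ?AA \<Longrightarrow> uf_closed X \<and> X \<noteq> {}"
      using assms unfolding closed_subsemigroup_def by blast+
    show "\<Inter>C \<in> ?AA" if "C \<noteq> {}" "C \<subseteq> ?AA" "\<Inter>C \<noteq> {}" for C
      using that uf_closed_Inter[of C] unfolding closed_subsemigroup_def by blast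
  qed
  then show ?thesis
    by (metis (no_types, lifting) mem_Collect_eq order_trans)
qed

lemma closed_subsemigroup_mult_right:
  assumes N: "closed_subsemigroup op N" and "x \<in> N"
  shows "closed_subsemigroup op ((\<lambda>y. ustar op y x) ` N)"
proof -
  have "N \<subseteq> deltaS op" "uf_closed N" and N_mult: "\<And>a b. a \<in> N \<Longrightarrow> b \<in> N \<Longrightarrow> ustar op a b \<in> N"
    using N unfolding closed_subsemigroup_def by blast+
  then have "(\<lambda>y. ustar op y x) ` N \<subseteq> N" "uf_closed ((\<lambda>y. ustar op y x) ` N)"
    using \<open>x \<in> N\<close> uf_closed_ustar_image by blast+
  moreover have "ustar op a (ustar op b x) \<in> (\<lambda>y. ustar op y x) ` N" if "a \<in> N" "b \<in> N" for a b
    using \<delta>.mult_assoc[of a b x] that \<open>x \<in> N\<close> \<open>N \<subseteq> deltaS op\<close> N_mult by (metis image_eqI subsetD)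
  ultimately show ?thesis
    using \<open>N \<subseteq> deltaS op\<close> \<open>x \<in> N\<close> unfolding closed_subsemigroup_def by blast
qed

lemma closed_subsemigroup_right_stabilizer:
  assumes N: "closed_subsemigroup op N" and "x \<in> N" "y \<in> N" "ustar op y x = x"
  shows "closed_subsemigroup op {z \<in> N. ustar op z x = x}"
proof -
  have "N \<subseteq> deltaS op" "uf_closed N" and N_mult: "\<And>a b. a \<in> N \<Longrightarrow> b \<in> N \<Longrightarrow> ustar op a b \<in> N"
    using N unfolding closed_subsemigroup_def by blast+
  then have "{z \<in> N. ustar op z x = x} = N \<inter> {p \<in> betaS. ustar op p x = x}"
    using deltaS_subset_betaS by blast
  then have "uf_closed {z \<in> N. ustar op z x = x}"
    using uf_closed_Int[OF \<open>uf_closed N\<close> uf_closed_ustar_fixed] \<open>x \<in> N\<close> \<open>N \<subseteq> deltaS op\<close> by auto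
  moreover have "ustar op (ustar op a b) x = x" if "a \<in> N" "b \<in> N" "ustar op b x = x" "ustar op a x = x" for a b
    using \<delta>.mult_assoc[of a b x] that \<open>x \<in> N\<close> \<open>N \<subseteq> deltaS op\<close> by auto
  ultimately show ?thesis
    using assms \<open>N \<subseteq> deltaS op\<close> N_mult unfolding closed_subsemigroup_def by auto
qed

text \<open>Ellis' theorem: in a minimal closed subsemigroup \<open>N\<close>, both \<open>N x\<close> and the stabilizer
  \<open>{y \<in> N. y x = x}\<close> are closed subsemigroups, hence equal to \<open>N\<close>.\<close>

lemma closed_subsemigroup_has_idempotent:
  assumes "closed_subsemigroup op M"
  shows "\<exists>e\<in>M. ustar op e e = e"
proof -
  obtain N where "N \<subseteq> M" and N: "closed_subsemigroup op N"
    and min: "\<And>X. closed_subsemigroup op X \<Longrightarrow> X \<subseteq> N \<Longrightarrow> X = N"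
    using minimal_closed_subsemigroup_exists[OF assms] by blast
  obtain x where "x \<in> N"
    using N unfolding closed_subsemigroup_def by blast
  have "(\<lambda>y. ustar op y x) ` N \<subseteq> N"
    using N \<open>x \<in> N\<close> unfolding closed_subsemigroup_def by blast
  then have "(\<lambda>y. ustar op y x) ` N = N"
    using min closed_subsemigroup_mult_right[OF N \<open>x \<in> N\<close>] by blast
  then obtain y where "y \<in> N" "ustar op y x = x"
    using \<open>x \<in> N\<close> by (metis imageE)
  then have "{z \<in> N. ustar op z x = x} = N"
    using min closed_subsemigroup_right_stabilizer[OF N \<open>x \<in> N\<close>] by blast
  then show ?thesis
    using \<open>x \<in> N\<close> \<open>N \<subseteq> M\<close> by blast
qed

end

section \<open>The extension of a homomorphism to \<open>\<delta>S\<close>\<close>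

lemma ext_in_betaS: "p \<in> betaS \<Longrightarrow> ext h p \<in> betaS"
  unfolding ext_def betaS_def using ultrafilter_boolean_hom boolean_hom_vimage by blast

lemma uf_closed_ext_fiber:
  assumes "q \<in> betaS"
  shows "uf_closed {p \<in> betaS. ext h p = q}"
proof -
  have "uf_closed {p \<in> betaS. {B. vimage h B \<in> p} = q}"
    using assms by (intro uf_closed_boolean_hom_fiber boolean_hom_vimage) (simp add: betaS_def)
  then show ?thesis
    unfolding ext_def .
qed

lemma ext_ustar:
  assumes hom: "ps_hom opS opT h" and "q \<in> deltaS opS"
  shows "ext h (ustar opS p q) = ustar opT (ext h p) (ext h q)"
proof -
  have "is_ultrafilter q" "\<And>s. phi opS s \<in> q"
    using assms(2) unfolding deltaS_iff by blast+
  have "sinv opS s (h -` B) = h -` sinv opT (h s) B \<inter> phi opS s" for s B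
    using hom unfolding ps_hom_def sinv_def phi_def by force
  then have "sinv opS s (h -` B) \<in> q \<longleftrightarrow> h -` sinv opT (h s) B \<in> q" for s B
    using ultrafilter_Int_iff[OF \<open>is_ultrafilter q\<close>] \<open>\<And>s. phi opS s \<in> q\<close> by simp
  then show ?thesis
    unfolding ext_def ustar_def by (simp add: vimage_def)
qed

lemma semigroup_epimorphism_ext:
  assumes "partial_semigroup opS" "partial_semigroup opT" "ps_hom opS opT h"
    and "ext h ` deltaS opS = deltaS opT"
  shows "semigroup_epimorphism (deltaS opS) (ustar opS) (deltaS opT) (ustar opT) (ext h)"
proof (intro semigroup_epimorphism.intro semigroup_epimorphism_axioms.intro)
  show "semigroup_on (deltaS opS) (ustar opS)"
    using assms(1) by (rule semigroup_on_deltaS)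
  show "semigroup_on (deltaS opT) (ustar opT)"
    using assms(2) by (rule semigroup_on_deltaS)
  show "ext h (ustar opS p q) = ustar opT (ext h p) (ext h q)" if "q \<in> deltaS opS" for p q
    using ext_ustar[OF assms(3) that] .
qed (fact assms(4))

context
  fixes opS :: "'a \<Rightarrow> 'a \<Rightarrow> 'a option" and opT :: "'b \<Rightarrow> 'b \<Rightarrow> 'b option" and h :: "'a \<Rightarrow> 'b"
  assumes psS: "partial_semigroup opS" and psT: "partial_semigroup opT" and adS: "adequate opS"
    and hom: "ps_hom opS opT h" and onto: "ext h ` deltaS opS = deltaS opT"
begin

interpretation ext: semigroup_epimorphism "deltaS opS" "ustar opS" "deltaS opT" "ustar opT" "ext h"
  using semigroup_epimorphism_ext[OF psS psT hom onto] .

lemma ext_image_KdeltaS: "ext h ` KdeltaS opS = KdeltaS opT"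
  using ext.Kmin_image minimal_left_ideal_deltaS_exists[OF psS adS] unfolding KdeltaS_def by blast

lemma central_image:
  assumes "central opS A"
  shows "central opT (h ` A)"
proof -
  obtain p where "p \<in> KdeltaS opS" "A \<in> p" "ustar opS p p = p"
    using assms unfolding central_def bclosure_def by blast
  obtain L where "minimal_left_ideal (deltaS opS) (ustar opS) L"
    using minimal_left_ideal_deltaS_exists[OF psS adS] by blast
  then have "p \<in> deltaS opS"
    using sg_idealD(2)[OF ext.S.sg_ideal_Kmin] \<open>p \<in> KdeltaS opS\<close> unfolding KdeltaS_def by blast
  then have "ext h p \<in> betaS" "is_ultrafilter p"
    using ext_in_betaS deltaS_subset_betaS deltaS_iff by blast+
  moreover have "h ` A \<in> ext h p"
    using ultrafilter_mono[OF \<open>is_ultrafilter p\<close> \<open>A \<in> p\<close>, of "h -` h ` A"] unfolding ext_def by blast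
  moreover have "ustar opT (ext h p) (ext h p) = ext h p"
    using ext.hom[OF \<open>p \<in> deltaS opS\<close> \<open>p \<in> deltaS opS\<close>] \<open>ustar opS p p = p\<close> by simp
  moreover have "ext h p \<in> KdeltaS opT"
    using ext_image_KdeltaS \<open>p \<in> KdeltaS opS\<close> by blast
  ultimately show ?thesis
    unfolding central_def bclosure_def by blast
qed

lemma closed_subsemigroup_fiber:
  assumes L: "minimal_left_ideal (deltaS opS) (ustar opS) L"
    and "q \<in> ext h ` L" "ustar opT q q = q"
  shows "closed_subsemigroup opS (L \<inter> {p \<in> betaS. ext h p = q})"
proof -
  have "L \<subseteq> deltaS opS"
    using left_idealD(2)[OF minimal_left_idealD(1)[OF L]] .
  then have "q \<in> betaS"
    using \<open>q \<in> ext h ` L\<close> onto deltaS_subset_betaS by blast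
  have "ustar opS a b \<in> L" "ustar opS a b \<in> betaS" if "a \<in> L" "b \<in> L" for a b
    using that left_idealD(3)[OF minimal_left_idealD(1)[OF L]] \<open>L \<subseteq> deltaS opS\<close>
      deltaS_subset_betaS by blast+
  moreover have "ext h (ustar opS a b) = q" if "a \<in> L" "b \<in> L" "ext h a = q" "ext h b = q" for a b
    using that ext.hom[of a b] \<open>L \<subseteq> deltaS opS\<close> \<open>ustar opT q q = q\<close> by (simp add: subset_iff)
  moreover have "uf_closed (L \<inter> {p \<in> betaS. ext h p = q})"
    using uf_closed_Int[OF uf_closed_minimal_left_ideal[OF psS L] uf_closed_ext_fiber[OF \<open>q \<in> betaS\<close>]] .
  moreover have "L \<inter> {p \<in> betaS. ext h p = q} \<noteq> {}"
    using \<open>q \<in> ext h ` L\<close> \<open>L \<subseteq> deltaS opS\<close> deltaS_subset_betaS by blast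
  ultimately show ?thesis
    using \<open>L \<subseteq> deltaS opS\<close> deltaS_subset_betaS unfolding closed_subsemigroup_def by auto
qed

lemma central_vimage:
  assumes "central opT A"
  shows "central opS (h -` A)"
proof -
  obtain q where "q \<in> KdeltaS opT" "A \<in> q" "ustar opT q q = q"
    using assms unfolding central_def bclosure_def by blast
  obtain L0 where "minimal_left_ideal (deltaS opS) (ustar opS) L0"
    using minimal_left_ideal_deltaS_exists[OF psS adS] by blast
  then obtain L where L: "minimal_left_ideal (deltaS opS) (ustar opS) L" "q \<in> ext h ` L"
    using ext.Kmin_mem_image_minimal_left_ideal \<open>q \<in> KdeltaS opT\<close> unfolding KdeltaS_def by blast
  then obtain e where e: "e \<in> L" "e \<in> betaS" "ext h e = q" "ustar opS e e = e"
    using closed_subsemigroup_has_idempotent[OF psS closed_subsemigroup_fiber] \<open>ustar opT q q = q\<close>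
    by blast
  then have "e \<in> KdeltaS opS"
    using ext.S.minimal_left_ideal_subset_Kmin[OF L(1)] unfolding KdeltaS_def by blast
  moreover have "h -` A \<in> e"
    using e \<open>A \<in> q\<close> unfolding ext_def by blast
  ultimately show ?thesis
    using e unfolding central_def bclosure_def by blast
qed

end

theorem theorem5p6:
  fixes opS :: "'a \<Rightarrow> 'a \<Rightarrow> 'a option" and opT :: "'b \<Rightarrow> 'b \<Rightarrow> 'b option"
    and h :: "'a \<Rightarrow> 'b"
  assumes "partial_semigroup opS" "pcommutative opS" "adequate opS"
    and "partial_semigroup opT" "pcommutative opT" "adequate opT"
    and "surj h" "ps_hom opS opT h"
    and "ext h ` deltaS opS = deltaS opT"
  shows "ext h ` KdeltaS opS = KdeltaS opT
         \<and> (\<forall>A. central opS A \<longrightarrow> central opT (h ` A))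
         \<and> (\<forall>A. central opT A \<longrightarrow> central opS (h -` A))"
  using ext_image_KdeltaS[OF assms(1,4,3,8,9)] central_image[OF assms(1,4,3,8,9)]
    central_vimage[OF assms(1,4,3,8,9)] by blast

end
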